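(* Let $A\subseteq\mathbb{R}$ be an open invex set with respect to $\eta:A\times A\to\mathbb{R}$ and let $a,b\in A$ with $a<a+\eta(b,a)$. Let $f:A\to\mathbb{R}$ be differentiable with $f'\in L[a,a+\eta(b,a)]$, and suppose $|f'|^q$ is preinvex on $A$ for some fixed $q>1$. Let $\frac1p+\frac1q=1$ and $\alpha>0$. Then \[ \left|\frac{f(a)+f(a+\eta(b,a))}{2}-\frac{\Gamma(\alpha+1)}{2\eta^{\alpha}(b,a)}\Big[J_{a^+}^{\alpha}f\big(a+\eta(b,a)\big)+J_{(a+\eta(b,a))^-}^{\alpha}f(a)\Big]\right|\le\frac{\eta(b,a)}{\alpha+1}\left(1-\frac{1}{2^{\alpha}}\right)\left[\frac{|f'(a)|^q+|f'(b)|^q}{2}\right]^{1/q}. \]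
   Context: A set $A\subseteq\mathbb{R}$ is invex with respect to $\eta:A\times A\to\mathbb{R}$ if $x+t\eta(y,x)\in A$ for all $x,y\in A$ and $t\in[0,1]$. A function $g$ on an invex set $A$ is preinvex with respect to $\eta$ if $g(x+t\eta(y,x))\le(1-t)g(x)+tg(y)$ for all $x,y\in A$, $t\in[0,1]$. For $g\in L[c,d]$ and $\alpha>0$, the Riemann–Liouville fractional integrals are $J_{c^+}^{\alpha}g(x)=\frac{1}{\Gamma(\alpha)}\int_c^x(x-t)^{\alpha-1}g(t)\,dt$ for $x>c$ and $J_{d^-}^{\alpha}g(x)=\frac{1}{\Gamma(\alpha)}\int_x^d(t-x)^{\alpha-1}g(t)\,dt$ for $x<d$; $\eta^{\alpha}(b,a)=(\eta(b,a))^{\alpha}$. *)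

theory Defs
  imports "HOL-Analysis.Analysis"
begin

definition invex_set :: "real set \<Rightarrow> (real \<Rightarrow> real \<Rightarrow> real) \<Rightarrow> bool" where
  "invex_set A \<eta> \<longleftrightarrow> (\<forall>x\<in>A. \<forall>y\<in>A. \<forall>t\<in>{0..1}. x + t * \<eta> y x \<in> A)"

definition preinvex_on :: "real set \<Rightarrow> (real \<Rightarrow> real \<Rightarrow> real) \<Rightarrow> (real \<Rightarrow> real) \<Rightarrow> bool" where
  "preinvex_on A \<eta> g \<longleftrightarrow>
     (\<forall>x\<in>A. \<forall>y\<in>A. \<forall>t\<in>{0..1}. g (x + t * \<eta> y x) \<le> (1 - t) * g x + t * g y)"

definition RL_left :: "real \<Rightarrow> real \<Rightarrow> (real \<Rightarrow> real) \<Rightarrow> real \<Rightarrow> real" where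
  "RL_left \<alpha> c g x = (1 / Gamma \<alpha>) * (LBINT t=c..x. (x - t) powr (\<alpha> - 1) * g t)"

definition RL_right :: "real \<Rightarrow> real \<Rightarrow> (real \<Rightarrow> real) \<Rightarrow> real \<Rightarrow> real" where
  "RL_right \<alpha> d g x = (1 / Gamma \<alpha>) * (LBINT t=x..d. (t - x) powr (\<alpha> - 1) * g t)"

end

theory Submission
  imports Defs
begin

text \<open>Write c = a + \<eta>(b,a). Integration by parts against the kernel
  K(x) = ((c - x)^\<alpha> - (x - a)^\<alpha>) / (c - a)^\<alpha>, whose derivative produces exactly the two
  Riemann--Liouville integrals, turns the left-hand side into minus half the integral of K f' over [a, c].
  Preinvexity bounds |f'(x)|^q on [a, c] by the linear interpolation of |f'(a)|^q and |f'(b)|^q.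
  A Hoelder estimate with weight |K| then gives the claim: the total weight of |K| is
  2 (c - a) (1 - 2^-\<alpha>) / (\<alpha> + 1), and by the symmetry K(a + c - x) = -K(x) the interpolation
  averages to (|f'(a)|^q + |f'(b)|^q) / 2 against |K|.\<close>

lemma has_integral_reflect_interval:
  fixes g :: "real \<Rightarrow> 'b::real_normed_vector"
  assumes "(g has_integral i) {a..c}"
  shows "((\<lambda>x. g (a + c - x)) has_integral i) {a..c}"
proof -
  have "((\<lambda>x. g (-x)) has_integral i) (cbox (-c) (-a))"
    using has_integral_reflect_lemma_real[OF assms] by simp
  from has_integral_affinity'[OF this, of 1 "-(a + c)"]
  show ?thesis by (simp add: algebra_simps)
qed

lemma has_integral_powr_diff_left:
  fixes a c r :: real
  assumes "r > -1" "a \<le> c"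
  shows "((\<lambda>x. (x - a) powr r) has_integral (c - a) powr (r + 1) / (r + 1)) {a..c}"
proof -
  have "((\<lambda>y. y powr r) has_integral (c - a) powr (r + 1) / (r + 1)) (cbox 0 (c - a))"
    using has_integral_powr_from_0[of r "c - a"] assms by simp
  from has_integral_affinity'[OF this, of 1 "-a"] show ?thesis by simp
qed

lemma has_integral_powr_diff_right:
  fixes a c r :: real
  assumes "r > -1" "a \<le> c"
  shows "((\<lambda>x. (c - x) powr r) has_integral (c - a) powr (r + 1) / (r + 1)) {a..c}"
  using has_integral_reflect_interval[OF has_integral_powr_diff_left[OF assms]] by simp

lemma set_integrable_lborel_if_absolutely_integrable:
  fixes g :: "real \<Rightarrow> real"
  assumes "g absolutely_integrable_on S" "set_borel_measurable borel S g"
  shows "set_integrable lborel S g"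
  using assms unfolding set_integrable_def set_borel_measurable_def
  by (simp add: integrable_completion)

lemma absolutely_integrable_if_set_integrable_lborel:
  fixes g :: "real \<Rightarrow> real"
  assumes "set_integrable lborel S g"
  shows "g absolutely_integrable_on S"
  using assms unfolding absolutely_integrable_on_def set_integrable_def
  by (subst integrable_completion) (auto intro: borel_measurable_integrable)

lemma set_integrable_lborel_mult_continuous:
  fixes k f :: "real \<Rightarrow> real"
  assumes k: "k absolutely_integrable_on {a..c}" "k \<in> borel_measurable borel"
    and f: "continuous_on {a..c} f"
  shows "set_integrable lborel {a..c} (\<lambda>x. k x * f x)"
proof (rule set_integrable_lborel_if_absolutely_integrable)
  have "f \<in> borel_measurable (lebesgue_on {a..c})"
    using f by (rule continuous_imp_measurable_on_sets_lebesgue) auto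
  moreover have "bounded (f ` {a..c})"
    using f by (intro compact_imp_bounded compact_continuous_image) auto
  ultimately show "(\<lambda>x. k x * f x) absolutely_integrable_on {a..c}"
    using absolutely_integrable_bounded_measurable_product_real[OF _ _ _ k(1)]
    by (simp add: mult.commute)
  have "(\<lambda>x. k x * (indicator {a..c} x *\<^sub>R f x)) \<in> borel_measurable borel"
    using borel_measurable_continuous_on_indicator[OF _ f] k(2) by measurable
  then show "set_borel_measurable borel {a..c} (\<lambda>x. k x * f x)"
    unfolding set_borel_measurable_def by (simp add: mult.left_commute)
qed

lemma has_integral_RL_left:
  fixes f :: "real \<Rightarrow> real"
  assumes "a \<le> c" "\<alpha> > 0" "continuous_on {a..c} f"
  shows "((\<lambda>x. (c - x) powr (\<alpha> - 1) * f x) has_integral Gamma \<alpha> * RL_left \<alpha> a f c) {a..c}"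
proof -
  have "(\<lambda>x. (c - x) powr (\<alpha> - 1)) absolutely_integrable_on {a..c}"
    using has_integral_powr_diff_right[of "\<alpha> - 1" a c] assms
    by (intro nonnegative_absolutely_integrable_1) auto
  then have "set_integrable lborel {a..c} (\<lambda>x. (c - x) powr (\<alpha> - 1) * f x)"
    using assms(3) by (intro set_integrable_lborel_mult_continuous) auto
  moreover have "Gamma \<alpha> > 0"
    using assms(2) by (rule Gamma_real_pos)
  ultimately show ?thesis
    using assms(1) by (auto simp: RL_left_def interval_integral_eq_integral
        intro!: integrable_integral set_borel_integral_eq_integral(1))
qed

lemma has_integral_RL_right:
  fixes f :: "real \<Rightarrow> real"
  assumes "a \<le> c" "\<alpha> > 0" "continuous_on {a..c} f"
  shows "((\<lambda>x. (x - a) powr (\<alpha> - 1) * f x) has_integral Gamma \<alpha> * RL_right \<alpha> c f a) {a..c}"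
proof -
  have "(\<lambda>x. (x - a) powr (\<alpha> - 1)) absolutely_integrable_on {a..c}"
    using has_integral_powr_diff_left[of "\<alpha> - 1" a c] assms
    by (intro nonnegative_absolutely_integrable_1) auto
  then have "set_integrable lborel {a..c} (\<lambda>x. (x - a) powr (\<alpha> - 1) * f x)"
    using assms(3) by (intro set_integrable_lborel_mult_continuous) auto
  moreover have "Gamma \<alpha> > 0"
    using assms(2) by (rule Gamma_real_pos)
  ultimately show ?thesis
    using assms(1) by (auto simp: RL_right_def interval_integral_eq_integral
        intro!: integrable_integral set_borel_integral_eq_integral(1))
qed

text \<open>In the variable t = (x - a) / (c - a) this is the familiar kernel (1 - t)^\<alpha> - t^\<alpha>.\<close>

definition trapezoid_kernel :: "real \<Rightarrow> real \<Rightarrow> real \<Rightarrow> real \<Rightarrow> real" where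
  "trapezoid_kernel \<alpha> a c x = ((c - x) powr \<alpha> - (x - a) powr \<alpha>) / (c - a) powr \<alpha>"

lemma continuous_on_trapezoid_kernel:
  assumes "\<alpha> > 0"
  shows "continuous_on {a..c} (trapezoid_kernel \<alpha> a c)"
proof -
  have "continuous_on {a..c} (\<lambda>x. (c - x) powr \<alpha>)" "continuous_on {a..c} (\<lambda>x. (x - a) powr \<alpha>)"
    by (rule continuous_on_powr'; use assms in \<open>auto intro!: continuous_intros\<close>)+
  then show ?thesis
    unfolding trapezoid_kernel_def[abs_def] divide_inverse
    by (intro continuous_on_mult continuous_on_diff continuous_on_const)
qed

lemma trapezoid_kernel_reflect: "trapezoid_kernel \<alpha> a c (a + c - x) = - trapezoid_kernel \<alpha> a c x"
  unfolding trapezoid_kernel_def by (simp add: diff_divide_distrib)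

lemma trapezoid_kernel_endpoints:
  assumes "a < c" "\<alpha> > 0"
  shows "trapezoid_kernel \<alpha> a c a = 1" "trapezoid_kernel \<alpha> a c c = -1"
  using assms by (simp_all add: trapezoid_kernel_def)

lemma trapezoid_kernel_has_real_derivative:
  assumes "a < x" "x < c"
  shows "(trapezoid_kernel \<alpha> a c has_real_derivative
           - \<alpha> * ((c - x) powr (\<alpha> - 1) + (x - a) powr (\<alpha> - 1)) / (c - a) powr \<alpha>) (at x)"
  unfolding trapezoid_kernel_def[abs_def] using assms
  by (auto intro!: derivative_eq_intros simp: field_simps)

lemma trapezoid_kernel_nonneg:
  assumes "a \<le> x" "x \<le> (a + c) / 2" "\<alpha> > 0"
  shows "trapezoid_kernel \<alpha> a c x \<ge> 0"
  using assms unfolding trapezoid_kernel_def by (auto intro!: divide_nonneg_nonneg powr_mono2)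

lemma trapezoid_kernel_nonpos:
  assumes "(a + c) / 2 \<le> x" "x \<le> c" "\<alpha> > 0"
  shows "trapezoid_kernel \<alpha> a c x \<le> 0"
  using assms unfolding trapezoid_kernel_def by (auto intro!: divide_nonpos_nonneg powr_mono2)

lemma has_integral_trapezoid_kernel:
  assumes "a \<le> u" "u \<le> v" "v \<le> c" "\<alpha> > 0"
  shows "(trapezoid_kernel \<alpha> a c has_integral
           ((c - u) powr (\<alpha> + 1) + (u - a) powr (\<alpha> + 1) - (c - v) powr (\<alpha> + 1) - (v - a) powr (\<alpha> + 1))
             / ((\<alpha> + 1) * (c - a) powr \<alpha>)) {u..v}"
proof -
  define P where "P x = - ((c - x) powr (\<alpha> + 1) + (x - a) powr (\<alpha> + 1)) / ((\<alpha> + 1) * (c - a) powr \<alpha>)"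
    for x
  have "(trapezoid_kernel \<alpha> a c has_integral P v - P u) {u..v}"
  proof (rule fundamental_theorem_of_calculus_interior)
    have "continuous_on {u..v} (\<lambda>x. (c - x) powr (\<alpha> + 1))" "continuous_on {u..v} (\<lambda>x. (x - a) powr (\<alpha> + 1))"
      by (rule continuous_on_powr'; use assms in \<open>auto intro!: continuous_intros\<close>)+
    then show "continuous_on {u..v} P"
      unfolding P_def divide_inverse
      by (intro continuous_on_mult continuous_on_minus continuous_on_add continuous_on_const)
    fix x assume x: "x \<in> {u<..<v}"
    then have "(c - a) powr \<alpha> > 0"
      using assms by simp
    with x assms have "(P has_real_derivative trapezoid_kernel \<alpha> a c x) (at x)"
      unfolding P_def[abs_def] trapezoid_kernel_def
      by (auto intro!: derivative_eq_intros simp: divide_simps) (simp add: algebra_simps)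
    then show "(P has_vector_derivative trapezoid_kernel \<alpha> a c x) (at x)"
      by (simp add: has_real_derivative_iff_has_vector_derivative)
  qed (use assms in auto)
  moreover have "P v - P u = ((c - u) powr (\<alpha> + 1) + (u - a) powr (\<alpha> + 1) - (c - v) powr (\<alpha> + 1)
      - (v - a) powr (\<alpha> + 1)) / ((\<alpha> + 1) * (c - a) powr \<alpha>)"
    unfolding P_def by (simp add: diff_divide_distrib add_divide_distrib)
  ultimately show ?thesis by simp
qed

lemma has_integral_abs_trapezoid_kernel:
  assumes "a < c" "\<alpha> > 0"
  shows "((\<lambda>x. \<bar>trapezoid_kernel \<alpha> a c x\<bar>) has_integral 2 * (c - a) / (\<alpha> + 1) * (1 - 1 / 2 powr \<alpha>)) {a..c}"
proof -
  define h where "h = c - a"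
  define m where "m = (a + c) / 2"
  define half where "half = h / (\<alpha> + 1) * (1 - 1 / 2 powr \<alpha>)"
  have h: "h > 0" "c - m = h / 2" "m - a = h / 2"
    using assms by (simp_all add: h_def m_def field_simps)
  have half_eq: "h powr (\<alpha> + 1) - 2 * (h / 2) powr (\<alpha> + 1) = h powr \<alpha> * (h * (1 - 1 / 2 powr \<alpha>))"
    using h by (simp add: powr_add powr_divide algebra_simps)
  have "(trapezoid_kernel \<alpha> a c has_integral half) {a..m}"
    using has_integral_trapezoid_kernel[of a a m c \<alpha>] assms h half_eq
    by (simp add: h_def[symmetric] half_def)
  then have left: "((\<lambda>x. \<bar>trapezoid_kernel \<alpha> a c x\<bar>) has_integral half) {a..m}"
    by (rule has_integral_eq[rotated]) (use trapezoid_kernel_nonneg assms in \<open>auto simp: m_def\<close>)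
  have "(trapezoid_kernel \<alpha> a c has_integral - half) {m..c}"
    using has_integral_trapezoid_kernel[of a m c c \<alpha>] assms h
      arg_cong[OF half_eq, of uminus, unfolded minus_diff_eq]
    by (simp add: h_def[symmetric] half_def)
  from has_integral_neg[OF this, simplified] have right: "((\<lambda>x. \<bar>trapezoid_kernel \<alpha> a c x\<bar>) has_integral half) {m..c}"
    by (rule has_integral_eq[rotated]) (use trapezoid_kernel_nonpos assms in \<open>auto simp: m_def\<close>)
  have "((\<lambda>x. \<bar>trapezoid_kernel \<alpha> a c x\<bar>) has_integral half + half) {a..c}"
    by (rule has_integral_combine[OF _ _ left right]) (use assms in \<open>auto simp: m_def\<close>)
  moreover have "half + half = 2 * (c - a) / (\<alpha> + 1) * (1 - 1 / 2 powr \<alpha>)"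
    using assms unfolding half_def h_def by (simp add: field_simps)
  ultimately show ?thesis by simp
qed

lemma has_integral_abs_trapezoid_kernel_moments:
  assumes "a < c" "\<alpha> > 0"
  shows "((\<lambda>x. \<bar>trapezoid_kernel \<alpha> a c x\<bar> * (x - a)) has_integral (c - a)\<^sup>2 / (\<alpha> + 1) * (1 - 1 / 2 powr \<alpha>)) {a..c}"
    and "((\<lambda>x. \<bar>trapezoid_kernel \<alpha> a c x\<bar> * (c - x)) has_integral (c - a)\<^sup>2 / (\<alpha> + 1) * (1 - 1 / 2 powr \<alpha>)) {a..c}"
proof -
  let ?K = "\<lambda>x. \<bar>trapezoid_kernel \<alpha> a c x\<bar>"
  have "continuous_on {a..c} (\<lambda>x. ?K x * (x - a))"
    using continuous_on_trapezoid_kernel[OF assms(2)] by (intro continuous_intros)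
  then obtain J where J: "((\<lambda>x. ?K x * (x - a)) has_integral J) {a..c}"
    using integrable_continuous_interval by blast
  have J': "((\<lambda>x. ?K x * (c - x)) has_integral J) {a..c}"
    using has_integral_reflect_interval[OF J] by (simp add: trapezoid_kernel_reflect)
  have "((\<lambda>x. ?K x * (x - a) + ?K x * (c - x)) has_integral J + J) {a..c}"
    using J J' by (rule has_integral_add)
  moreover have "((\<lambda>x. ?K x * (x - a) + ?K x * (c - x)) has_integral
      (c - a) * (2 * (c - a) / (\<alpha> + 1) * (1 - 1 / 2 powr \<alpha>))) {a..c}"
    using has_integral_mult_right[OF has_integral_abs_trapezoid_kernel[OF assms], of "c - a"]
    by (rule has_integral_eq[rotated]) (simp add: algebra_simps)
  ultimately have "J + J = (c - a) * (2 * (c - a) / (\<alpha> + 1) * (1 - 1 / 2 powr \<alpha>))"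
    by (rule has_integral_unique)
  moreover have "(c - a) * (2 * (c - a) / (\<alpha> + 1) * (1 - 1 / 2 powr \<alpha>))
      = 2 * ((c - a)\<^sup>2 / (\<alpha> + 1) * (1 - 1 / 2 powr \<alpha>))"
    by (simp add: power2_eq_square)
  ultimately have "J = (c - a)\<^sup>2 / (\<alpha> + 1) * (1 - 1 / 2 powr \<alpha>)"
    by linarith
  with J J' show "((\<lambda>x. ?K x * (x - a)) has_integral (c - a)\<^sup>2 / (\<alpha> + 1) * (1 - 1 / 2 powr \<alpha>)) {a..c}"
    "((\<lambda>x. ?K x * (c - x)) has_integral (c - a)\<^sup>2 / (\<alpha> + 1) * (1 - 1 / 2 powr \<alpha>)) {a..c}"
    by simp_all
qed

lemma has_integral_abs_trapezoid_kernel_mult_interpolation: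
  assumes "a < c" "\<alpha> > 0"
  shows "((\<lambda>x. \<bar>trapezoid_kernel \<alpha> a c x\<bar> * (((c - x) * u + (x - a) * v) / (c - a))) has_integral
           2 * (c - a) / (\<alpha> + 1) * (1 - 1 / 2 powr \<alpha>) * ((u + v) / 2)) {a..c}"
proof -
  define M where "M = (c - a) / (\<alpha> + 1) * (1 - 1 / 2 powr \<alpha>)"
  have moment: "y / (c - a) * ((c - a)\<^sup>2 / (\<alpha> + 1) * (1 - 1 / 2 powr \<alpha>)) = y * M" for y
    using assms by (simp add: M_def power2_eq_square)
  have "((\<lambda>x. u / (c - a) * (\<bar>trapezoid_kernel \<alpha> a c x\<bar> * (c - x))
        + v / (c - a) * (\<bar>trapezoid_kernel \<alpha> a c x\<bar> * (x - a))) has_integral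
      u / (c - a) * ((c - a)\<^sup>2 / (\<alpha> + 1) * (1 - 1 / 2 powr \<alpha>))
        + v / (c - a) * ((c - a)\<^sup>2 / (\<alpha> + 1) * (1 - 1 / 2 powr \<alpha>))) {a..c}"
    using has_integral_abs_trapezoid_kernel_moments[OF assms]
    by (intro has_integral_add has_integral_mult_right)
  then have "((\<lambda>x. u / (c - a) * (\<bar>trapezoid_kernel \<alpha> a c x\<bar> * (c - x))
        + v / (c - a) * (\<bar>trapezoid_kernel \<alpha> a c x\<bar> * (x - a))) has_integral u * M + v * M) {a..c}"
    by (simp only: moment)
  moreover have "\<bar>trapezoid_kernel \<alpha> a c x\<bar> * (((c - x) * u + (x - a) * v) / (c - a))
      = u / (c - a) * (\<bar>trapezoid_kernel \<alpha> a c x\<bar> * (c - x)) + v / (c - a) * (\<bar>trapezoid_kernel \<alpha> a c x\<bar> * (x - a))"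
    for x by (simp add: divide_simps) (simp add: algebra_simps)
  moreover have "2 * (c - a) / (\<alpha> + 1) * (1 - 1 / 2 powr \<alpha>) = 2 * M"
    by (simp add: M_def)
  then have "2 * (c - a) / (\<alpha> + 1) * (1 - 1 / 2 powr \<alpha>) * ((u + v) / 2) = u * M + v * M"
    by (simp add: algebra_simps)
  ultimately show ?thesis
    by (simp only:)
qed

lemma absolutely_integrable_trapezoid_kernel_mult:
  fixes g :: "real \<Rightarrow> real"
  assumes "\<alpha> > 0" "g absolutely_integrable_on {a..c}"
  shows "(\<lambda>x. trapezoid_kernel \<alpha> a c x * g x) absolutely_integrable_on {a..c}"
proof (rule absolutely_integrable_bounded_measurable_product_real[OF _ _ _ assms(2)])
  show "trapezoid_kernel \<alpha> a c \<in> borel_measurable (lebesgue_on {a..c})"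
    using continuous_on_trapezoid_kernel[OF assms(1)]
    by (rule continuous_imp_measurable_on_sets_lebesgue) auto
  show "bounded (trapezoid_kernel \<alpha> a c ` {a..c})"
    using continuous_on_trapezoid_kernel[OF assms(1)]
    by (intro compact_imp_bounded compact_continuous_image) auto
qed auto

lemma trapezoid_kernel_integration_by_parts:
  fixes f f' :: "real \<Rightarrow> real"
  assumes "a < c" "\<alpha> > 0" "continuous_on {a..c} f"
    and "\<And>x. x \<in> {a<..<c} \<Longrightarrow> (f has_real_derivative f' x) (at x)"
  shows "((\<lambda>x. trapezoid_kernel \<alpha> a c x * f' x
            - \<alpha> / (c - a) powr \<alpha> * ((c - x) powr (\<alpha> - 1) * f x + (x - a) powr (\<alpha> - 1) * f x))
          has_integral - f c - f a) {a..c}"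
proof -
  let ?F = "\<lambda>x. trapezoid_kernel \<alpha> a c x * f x"
  have "((\<lambda>x. trapezoid_kernel \<alpha> a c x * f' x
            - \<alpha> / (c - a) powr \<alpha> * ((c - x) powr (\<alpha> - 1) * f x + (x - a) powr (\<alpha> - 1) * f x))
          has_integral ?F c - ?F a) {a..c}"
  proof (rule fundamental_theorem_of_calculus_interior)
    show "continuous_on {a..c} ?F"
      using continuous_on_trapezoid_kernel[OF assms(2)] assms(3) by (rule continuous_on_mult)
    fix x assume x: "x \<in> {a<..<c}"
    have "(?F has_real_derivative trapezoid_kernel \<alpha> a c x * f' x
        - \<alpha> / (c - a) powr \<alpha> * ((c - x) powr (\<alpha> - 1) * f x + (x - a) powr (\<alpha> - 1) * f x)) (at x)"
      using x by (intro DERIV_cong[OF DERIV_mult[OF trapezoid_kernel_has_real_derivative assms(4)[OF x]]])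
        (auto simp: diff_divide_distrib add_divide_distrib algebra_simps)
    then show "(?F has_vector_derivative trapezoid_kernel \<alpha> a c x * f' x
        - \<alpha> / (c - a) powr \<alpha> * ((c - x) powr (\<alpha> - 1) * f x + (x - a) powr (\<alpha> - 1) * f x)) (at x)"
      by (simp add: has_real_derivative_iff_has_vector_derivative)
  qed (use assms(1) in auto)
  then show ?thesis
    by (simp add: trapezoid_kernel_endpoints[OF assms(1,2)])
qed

lemma fractional_trapezoid_identity:
  fixes f f' :: "real \<Rightarrow> real"
  assumes "a < c" "\<alpha> > 0" "continuous_on {a..c} f"
    and "\<And>x. x \<in> {a<..<c} \<Longrightarrow> (f has_real_derivative f' x) (at x)"
    and "f' absolutely_integrable_on {a..c}"
  shows "(f a + f c) / 2 - Gamma (\<alpha> + 1) / (2 * (c - a) powr \<alpha>) * (RL_left \<alpha> a f c + RL_right \<alpha> c f a)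
       = - integral {a..c} (\<lambda>x. trapezoid_kernel \<alpha> a c x * f' x) / 2"
proof -
  define H where "H = (c - a) powr \<alpha>"
  define IK where "IK = integral {a..c} (\<lambda>x. trapezoid_kernel \<alpha> a c x * f' x)"
  define R where "R = RL_left \<alpha> a f c + RL_right \<alpha> c f a"
  have "((\<lambda>x. trapezoid_kernel \<alpha> a c x * f' x) has_integral IK) {a..c}"
    unfolding IK_def using absolutely_integrable_trapezoid_kernel_mult[OF assms(2,5)]
    by (intro integrable_integral set_lebesgue_integral_eq_integral(1))
  moreover have "((\<lambda>x. \<alpha> / H * ((c - x) powr (\<alpha> - 1) * f x + (x - a) powr (\<alpha> - 1) * f x))
      has_integral \<alpha> / H * (Gamma \<alpha> * RL_left \<alpha> a f c + Gamma \<alpha> * RL_right \<alpha> c f a)) {a..c}"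
    using assms(1-3)
    by (intro has_integral_mult_right has_integral_add has_integral_RL_left has_integral_RL_right) auto
  ultimately have "((\<lambda>x. trapezoid_kernel \<alpha> a c x * f' x
      - \<alpha> / H * ((c - x) powr (\<alpha> - 1) * f x + (x - a) powr (\<alpha> - 1) * f x))
      has_integral IK - \<alpha> * Gamma \<alpha> / H * R) {a..c}"
    by (simp add: R_def has_integral_diff algebra_simps)
  then have "IK - \<alpha> * Gamma \<alpha> / H * R = - f c - f a"
    using trapezoid_kernel_integration_by_parts[OF assms(1-4)] unfolding H_def
    by (rule has_integral_unique)
  moreover have "Gamma (\<alpha> + 1) = \<alpha> * Gamma \<alpha>"
    using assms(2) by (intro Gamma_plus1) (auto elim!: nonpos_Ints_cases)
  moreover have "H > 0"
    using assms(1) by (simp add: H_def)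
  ultimately show ?thesis
    unfolding H_def[symmetric] IK_def[symmetric] R_def[symmetric] by (simp add: field_simps)
qed

lemma conjugate_exponent_pos:
  fixes p q :: real
  assumes "q > 1" "1 / p + 1 / q = 1"
  shows "p > 0"
proof -
  have "1 / q < 1"
    using assms(1) by simp
  with assms(2) have "1 / p > 0" by linarith
  then show ?thesis by simp
qed

lemma Youngs_inequality_scaled:
  fixes u s p q :: real
  assumes "u \<ge> 0" "s > 0" "q > 1" "1 / p + 1 / q = 1"
  shows "u \<le> s / p + s powr (1 - q) * u powr q / q"
proof -
  have p: "p > 0"
    using assms(3,4) by (rule conjugate_exponent_pos)
  show ?thesis
  proof (cases "u = 0")
    case True
    then show ?thesis using p assms(2) by simp
  next
    case False
    define v where "v = s powr (1 - q) * u powr q"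
    have "v > 0"
      using False assms(1,2) by (simp add: v_def)
    then have "s powr (1 / p) * v powr (1 / q) \<le> 1 / p * s + 1 / q * v"
      using p assms by (intro Youngs_inequality_0) auto
    moreover have "s powr (1 / p) * v powr (1 / q) = s powr (1 / p + (1 - q) / q) * u"
      using assms by (simp add: v_def powr_mult powr_powr powr_add)
    moreover have "1 / p + (1 - q) / q = 0"
      using assms(3,4) by (simp add: diff_divide_distrib)
    ultimately show ?thesis
      using assms(2) by (simp add: v_def)
  qed
qed

lemma weighted_integral_le_Young_bound:
  fixes k g l :: "real \<Rightarrow> real"
  assumes w: "((\<lambda>x. \<bar>k x\<bar>) has_integral W) S" and wl: "((\<lambda>x. \<bar>k x\<bar> * l x) has_integral W * B) S"
    and wg: "(\<lambda>x. k x * g x) integrable_on S"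
    and majorant: "\<And>x. x \<in> S \<Longrightarrow> \<bar>g x\<bar> powr q \<le> l x"
    and q: "q > 1" "1 / p + 1 / q = 1" and s: "s > 0"
  shows "\<bar>integral S (\<lambda>x. k x * g x)\<bar> \<le> s / p * W + s powr (1 - q) / q * (W * B)"
proof -
  let ?\<phi> = "\<lambda>x. s / p * \<bar>k x\<bar> + s powr (1 - q) / q * (\<bar>k x\<bar> * l x)"
  have \<phi>: "(?\<phi> has_integral s / p * W + s powr (1 - q) / q * (W * B)) S"
    using w wl by (intro has_integral_add has_integral_mult_right)
  have "\<bar>k x * g x\<bar> \<le> ?\<phi> x" if x: "x \<in> S" for x
  proof -
    have "\<bar>g x\<bar> \<le> s / p + s powr (1 - q) * \<bar>g x\<bar> powr q / q"
      using s q by (intro Youngs_inequality_scaled) auto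
    also have "\<dots> \<le> s / p + s powr (1 - q) * l x / q"
      using majorant[OF x] q by (intro add_left_mono divide_right_mono mult_left_mono) auto
    finally have "\<bar>k x\<bar> * \<bar>g x\<bar> \<le> \<bar>k x\<bar> * (s / p + s powr (1 - q) * l x / q)"
      by (simp add: mult_left_mono)
    then show ?thesis
      by (simp add: abs_mult algebra_simps)
  qed
  then have "norm (integral S (\<lambda>x. k x * g x)) \<le> integral S ?\<phi>"
    using wg \<phi> by (intro integral_norm_bound_integral) auto
  with \<phi> show ?thesis
    by (simp add: integral_unique)
qed

text \<open>Hoelder's inequality in the form needed here. Going through the pointwise Young inequality avoids
  assuming that |g|^q is integrable; the optimal scale is s = B^(1/q).\<close>

lemma weighted_integral_le_power_mean:
  fixes k g l :: "real \<Rightarrow> real"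
  assumes w: "((\<lambda>x. \<bar>k x\<bar>) has_integral W) S" and wl: "((\<lambda>x. \<bar>k x\<bar> * l x) has_integral W * B) S"
    and wg: "(\<lambda>x. k x * g x) integrable_on S"
    and majorant: "\<And>x. x \<in> S \<Longrightarrow> \<bar>g x\<bar> powr q \<le> l x"
    and q: "q > 1" "1 / p + 1 / q = 1" and "B \<ge> 0"
  shows "\<bar>integral S (\<lambda>x. k x * g x)\<bar> \<le> W * B powr (1 / q)"
proof -
  let ?I = "integral S (\<lambda>x. k x * g x)"
  have bound: "\<bar>?I\<bar> \<le> s / p * W + s powr (1 - q) / q * (W * B)" if "s > 0" for s
    by (rule weighted_integral_le_Young_bound[OF w wl wg _ q that]) (rule majorant)
  have p: "p > 0"
    using q by (rule conjugate_exponent_pos)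
  show ?thesis
  proof (cases "B = 0")
    case True
    have "eventually (\<lambda>s. \<bar>?I\<bar> \<le> s / p * W) (at_right 0)"
      using eventually_at_right_less by (rule eventually_mono) (use bound True in simp)
    moreover have "((\<lambda>s. s / p * W) \<longlongrightarrow> 0 / p * W) (at_right 0)"
      using p by (intro tendsto_intros) auto
    ultimately have "\<bar>?I\<bar> \<le> 0"
      using tendsto_le[OF trivial_limit_at_right_real _ tendsto_const] by fastforce
    with True q p show ?thesis by simp
  next
    case False
    define s where "s = B powr (1 / q)"
    have s: "s > 0"
      using False \<open>B \<ge> 0\<close> by (simp add: s_def)
    have "s powr q = B"
      using \<open>B \<ge> 0\<close> q(1) by (simp add: s_def powr_powr)
    then have sB: "s powr (1 - q) * B = s"
      using s powr_add[of s "1 - q" q] by simp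
    have "\<bar>?I\<bar> \<le> s / p * W + s powr (1 - q) * B * W / q"
      using bound[OF s] by (simp add: algebra_simps)
    also have "\<dots> = s * W * (1 / p + 1 / q)"
      unfolding sB by (simp add: algebra_simps)
    finally show ?thesis
      using q(2) by (simp add: s_def mult.commute)
  qed
qed

lemma invex_set_interval_subset:
  assumes "invex_set A \<eta>" "a \<in> A" "b \<in> A" "\<eta> b a > 0"
  shows "{a..a + \<eta> b a} \<subseteq> A"
proof
  fix x assume x: "x \<in> {a..a + \<eta> b a}"
  then have "(x - a) / \<eta> b a \<in> {0..1}"
    using assms(4) by (auto simp: divide_simps)
  then have "a + (x - a) / \<eta> b a * \<eta> b a \<in> A"
    using assms(1-3) unfolding invex_set_def by blast
  then show "x \<in> A"
    using assms(4) by simp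
qed

lemma preinvex_on_le_interpolation:
  assumes "preinvex_on A \<eta> g" "a \<in> A" "b \<in> A" "\<eta> b a > 0" "x \<in> {a..a + \<eta> b a}"
  shows "g x \<le> ((a + \<eta> b a - x) * g a + (x - a) * g b) / \<eta> b a"
proof -
  have t: "(x - a) / \<eta> b a \<in> {0..1}"
    using assms(4,5) by (auto simp: divide_simps)
  have "g (a + (x - a) / \<eta> b a * \<eta> b a) \<le> (1 - (x - a) / \<eta> b a) * g a + (x - a) / \<eta> b a * g b"
    using assms(1-3) t unfolding preinvex_on_def by blast
  moreover have "(1 - (x - a) / \<eta> b a) * g a + (x - a) / \<eta> b a * g b
      = ((a + \<eta> b a - x) * g a + (x - a) * g b) / \<eta> b a"
    using assms(4) by (simp add: field_simps)
  ultimately show ?thesis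
    using assms(4) by simp
qed

theorem theorem2p5:
  fixes A :: "real set" and \<eta> :: "real \<Rightarrow> real \<Rightarrow> real"
    and f f' :: "real \<Rightarrow> real" and a b p q \<alpha> :: real
  assumes "open A" and "invex_set A \<eta>"
    and "a \<in> A" and "b \<in> A" and "a < a + \<eta> b a"
    and "\<And>x. x \<in> A \<Longrightarrow> (f has_real_derivative f' x) (at x)"
    and "set_integrable lborel {a..a + \<eta> b a} f'"
    and "q > 1" and "1 / p + 1 / q = 1"
    and "preinvex_on A \<eta> (\<lambda>x. \<bar>f' x\<bar> powr q)"
    and "\<alpha> > 0"
  shows "\<bar>(f a + f (a + \<eta> b a)) / 2
          - Gamma (\<alpha> + 1) / (2 * (\<eta> b a) powr \<alpha>)
            * (RL_left \<alpha> a f (a + \<eta> b a) + RL_right \<alpha> (a + \<eta> b a) f a)\<bar>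
         \<le> \<eta> b a / (\<alpha> + 1) * (1 - 1 / 2 powr \<alpha>)
            * ((\<bar>f' a\<bar> powr q + \<bar>f' b\<bar> powr q) / 2) powr (1 / q)"
proof -
  define c where "c = a + \<eta> b a"
  have h: "\<eta> b a > 0" "a < c"
    using assms(5) by (simp_all add: c_def)
  have sub: "{a..c} \<subseteq> A"
    using invex_set_interval_subset[OF assms(2-4) h(1)] by (simp add: c_def)
  have der: "(f has_real_derivative f' x) (at x)" if "x \<in> {a..c}" for x
    using sub assms(6) that by blast
  then have "continuous_on {a..c} f"
    by (intro continuous_at_imp_continuous_on ballI DERIV_isCont)
  then have "(f a + f c) / 2 - Gamma (\<alpha> + 1) / (2 * (c - a) powr \<alpha>) * (RL_left \<alpha> a f c + RL_right \<alpha> c f a)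
      = - integral {a..c} (\<lambda>x. trapezoid_kernel \<alpha> a c x * f' x) / 2"
    using der assms(7,11) h(2) absolutely_integrable_if_set_integrable_lborel
    by (intro fractional_trapezoid_identity) (auto simp: c_def)
  moreover have "\<bar>integral {a..c} (\<lambda>x. trapezoid_kernel \<alpha> a c x * f' x)\<bar>
      \<le> 2 * (c - a) / (\<alpha> + 1) * (1 - 1 / 2 powr \<alpha>) * ((\<bar>f' a\<bar> powr q + \<bar>f' b\<bar> powr q) / 2) powr (1 / q)"
  proof (rule weighted_integral_le_power_mean[OF has_integral_abs_trapezoid_kernel[OF h(2) assms(11)]
        has_integral_abs_trapezoid_kernel_mult_interpolation[OF h(2) assms(11)] _ _ assms(8,9)])
    show "(\<lambda>x. trapezoid_kernel \<alpha> a c x * f' x) integrable_on {a..c}"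
      using assms(7) unfolding c_def
      by (intro set_lebesgue_integral_eq_integral(1) absolutely_integrable_trapezoid_kernel_mult
          absolutely_integrable_if_set_integrable_lborel assms(11))
    show "\<bar>f' x\<bar> powr q \<le> ((c - x) * \<bar>f' a\<bar> powr q + (x - a) * \<bar>f' b\<bar> powr q) / (c - a)"
      if "x \<in> {a..c}" for x
      using preinvex_on_le_interpolation[OF assms(10) assms(3,4) h(1)] that by (simp add: c_def)
  qed simp
  ultimately show ?thesis
    unfolding c_def by (simp add: mult_ac)
qed

end
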